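(* Let $H_1,H_2$ be non-empty graphs with $H_1\ne H_2$ and $m_2(H_1)>m_2(H_2)>1$, such that $H_2$ is strictly $2$-balanced and $H_1$ is strictly balanced with respect to $d_2(\cdot,H_2)$. Let $F$ be a graph and $\hat{e}\in E(F)$. Then for any $J\in\mathcal{H}(F,\hat{e},H_1,H_2)\setminus\mathcal{H}^*(F,\hat{e},H_1,H_2)$ and any $J^*\in\mathcal{H}^*(F,\hat{e},H_1,H_2)$, \[\frac{e^+(J)}{v^+(J)} > \frac{e^+(J^* )}{v^+(J^* )}.\]
   Context: For a graph $H$ write $v_H=|V(H)|$, $e_H=|E(H)|$; $d_2(H) = (e_H-1)/(v_H-2)$ if $H$ is non-empty and $v_H \geq 3$, $d_2(K_2)=1/2$, $d_2(H)=0$ otherwise; $m_2(H)=\max_{J\subseteq H} d_2(J)$; $H$ is strictly $2$-balanced if $d_2(J)<m_2(H)$ for all proper subgraphs $J\subsetneq H$. $d_2(H_1,H_2) = e_{H_1}/(v_{H_1} - 2 + 1/m_2(H_2))$ if $H_2$ is non-empty and $v_{H_1}\ge2$, and $0$ otherwise; $m_2(H_1,H_2)=\max_{J\subseteq H_1} d_2(J,H_2)$; $H_1$ is strictly balanced with respect to $d_2(\cdot,H_2)$ if $d_2(J,H_2)<m_2(H_1,H_2)$ for all proper subgraphs $J\subsetneq H_1$. $\mathcal{H}(F,\hat{e},H_1,H_2)$ is the family of graphs $J$ obtained from $F$ as follows: attach a copy $H_{\hat e}$ of $H_2$ to $F$ with $E(H_{\hat e})\cap E(F)=\{\hat e\}$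 and $V(H_{\hat e})\cap V(F)=\hat e$ (any edge of $H_2$ in any orientation may be identified with $\hat e$); then for each edge $f\in E(H_{\hat e})\setminus\{\hat e\}$ attach a copy $H_f$ of $H_1$ to $F\cup H_{\hat e}$ (and to previously attached copies) such that $E(F\cup H_{\hat e})\cap E(H_f)=\{f\}$ and $(V(F)\setminus\hat e)\cap V(H_f)=\emptyset$. (The copies $H_f$ may share vertices and edges with each other and vertices with $H_{\hat e}$.) For such $J$, the inner edges are $E_J=E(H_{\hat e})\setminus\{\hat e\}$, and for $f\in E_J$ let $U_J(f)=V(H_f)\setminus f$ and $D_J(f)=E(H_f)\setminus\{f\}$. $\mathcal{H}^*(F,\hat e,H_1,H_2)\subseteq\mathcal{H}(F,\hat e,H_1,H_2)$ consists of those $J$ (with their construction) such that $U_J(f_1)\cap U_J(f_2)=\emptyset$ and $D_J(f_1)\cap D_J(f_2)=\emptyset$ for all distinct $f_1,f_2\in E_J$, and $U_J(f)\cap V(H_{\hat e})=\emptyset$ for all $f\in E_J$. For $J\in\mathcal{H}(F,\hat e,H_1,H_2)$, $v^+(J)=|V(J)\setminus V(F)|$ and $e^+(J)=|E(J)\setminus E(F)|$. *)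

theory Defs
  imports Complex_Main
begin

type_synonym 'a graph = "'a set \<times> 'a set set"

definition verts :: "'a graph \<Rightarrow> 'a set" where "verts G = fst G"
definition edges :: "'a graph \<Rightarrow> 'a set set" where "edges G = snd G"

definition wf_graph :: "'a graph \<Rightarrow> bool" where
  "wf_graph G \<longleftrightarrow> finite (verts G) \<and> (\<forall>e\<in>edges G. e \<subseteq> verts G \<and> card e = 2)"

definition vnum :: "'a graph \<Rightarrow> nat" where "vnum G = card (verts G)"
definition enum :: "'a graph \<Rightarrow> nat" where "enum G = card (edges G)"

definition nonempty_graph :: "'a graph \<Rightarrow> bool" where
  "nonempty_graph G \<longleftrightarrow> edges G \<noteq> {}"

definition subgraph :: "'a graph \<Rightarrow> 'a graph \<Rightarrow> bool" where
  "subgraph J G \<longleftrightarrow> wf_graph J \<and> verts J \<subseteq> verts G \<and> edges J \<subseteq> edges G"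

definition d2 :: "'a graph \<Rightarrow> real" where
  "d2 H = (if nonempty_graph H \<and> vnum H \<ge> 3 then (real (enum H) - 1) / (real (vnum H) - 2)
           else if vnum H = 2 \<and> enum H = 1 then 1/2 else 0)"

definition m2 :: "'a graph \<Rightarrow> real" where
  "m2 H = Max (d2 ` {J. subgraph J H})"

definition strictly_2_balanced :: "'a graph \<Rightarrow> bool" where
  "strictly_2_balanced H \<longleftrightarrow> (\<forall>J. subgraph J H \<and> J \<noteq> H \<longrightarrow> d2 J < m2 H)"

definition d2_asym :: "'a graph \<Rightarrow> 'b graph \<Rightarrow> real" where
  "d2_asym H1 H2 = (if nonempty_graph H2 \<and> vnum H1 \<ge> 2
      then real (enum H1) / (real (vnum H1) - 2 + 1 / m2 H2) else 0)"

definition m2_asym :: "'a graph \<Rightarrow> 'b graph \<Rightarrow> real" where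
  "m2_asym H1 H2 = Max ((\<lambda>J. d2_asym J H2) ` {J. subgraph J H1})"

definition strictly_balanced_wrt :: "'a graph \<Rightarrow> 'b graph \<Rightarrow> bool" where
  "strictly_balanced_wrt H1 H2 \<longleftrightarrow>
     (\<forall>J. subgraph J H1 \<and> J \<noteq> H1 \<longrightarrow> d2_asym J H2 < m2_asym H1 H2)"

definition iso :: "'b graph \<Rightarrow> 'a graph \<Rightarrow> bool" where
  "iso G H \<longleftrightarrow> (\<exists>\<phi>. bij_betw \<phi> (verts G) (verts H) \<and>
      (\<forall>u\<in>verts G. \<forall>v\<in>verts G. {u, v} \<in> edges G \<longleftrightarrow> {\<phi> u, \<phi> v} \<in> edges H))"

text \<open>A construction of J from F, \<open>\<hat>e\<close>: Hhat is the copy of H2, Hf f the copy of H1 attached at f.\<close>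
definition construction ::
  "'a graph \<Rightarrow> 'a set \<Rightarrow> 'b graph \<Rightarrow> 'c graph \<Rightarrow> 'a graph \<Rightarrow> 'a graph \<Rightarrow> ('a set \<Rightarrow> 'a graph) \<Rightarrow> bool" where
  "construction F eh H1 H2 J Hhat Hf \<longleftrightarrow>
     wf_graph Hhat \<and> iso H2 Hhat \<and>
     edges Hhat \<inter> edges F = {eh} \<and> verts Hhat \<inter> verts F = eh \<and>
     (\<forall>f \<in> edges Hhat - {eh}.
        wf_graph (Hf f) \<and> iso H1 (Hf f) \<and>
        edges (Hf f) \<inter> (edges F \<union> edges Hhat) = {f} \<and>
        (verts F - eh) \<inter> verts (Hf f) = {}) \<and>
     J = (verts F \<union> verts Hhat \<union> (\<Union>f \<in> edges Hhat - {eh}. verts (Hf f)),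
          edges F \<union> edges Hhat \<union> (\<Union>f \<in> edges Hhat - {eh}. edges (Hf f)))"

definition star_conditions :: "'a set \<Rightarrow> 'a graph \<Rightarrow> ('a set \<Rightarrow> 'a graph) \<Rightarrow> bool" where
  "star_conditions eh Hhat Hf \<longleftrightarrow>
     (\<forall>f1 \<in> edges Hhat - {eh}. \<forall>f2 \<in> edges Hhat - {eh}. f1 \<noteq> f2 \<longrightarrow>
        (verts (Hf f1) - f1) \<inter> (verts (Hf f2) - f2) = {} \<and>
        (edges (Hf f1) - {f1}) \<inter> (edges (Hf f2) - {f2}) = {}) \<and>
     (\<forall>f \<in> edges Hhat - {eh}. (verts (Hf f) - f) \<inter> verts Hhat = {})"

definition family_H :: "'a graph \<Rightarrow> 'a set \<Rightarrow> 'b graph \<Rightarrow> 'c graph \<Rightarrow> 'a graph set" where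
  "family_H F eh H1 H2 = {J. \<exists>Hhat Hf. construction F eh H1 H2 J Hhat Hf}"

definition family_Hstar :: "'a graph \<Rightarrow> 'a set \<Rightarrow> 'b graph \<Rightarrow> 'c graph \<Rightarrow> 'a graph set" where
  "family_Hstar F eh H1 H2 =
     {J. \<exists>Hhat Hf. construction F eh H1 H2 J Hhat Hf \<and> star_conditions eh Hhat Hf}"

definition vplus :: "'a graph \<Rightarrow> 'a graph \<Rightarrow> nat" where
  "vplus F J = card (verts J - verts F)"
definition eplus :: "'a graph \<Rightarrow> 'a graph \<Rightarrow> nat" where
  "eplus F J = card (edges J - edges F)"

end

theory Submission
  imports Defs
begin

(* Let lam = m2(H1,H2) and m = m2(H2). View J as the copy of H2 on a vertex set Z together
   with the petals, the copies of H1 attached at its inner edges I. Since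
   |I| = e(H2) - 1 = m (v(H2) - 2), the quantity e+(J) - lam v+(J) equals
     T(I) = e(I) - lam |X(I)| - lam |I| / m,
   where e(S) counts the edges of the petals at S and X(S) their vertices outside Z. Split
     T(S) = [e(S) - lam (v(S) - 2 + 1/m)] + lam [|Z(S)| - 2 + 1/m - |S|/m].
   The first bracket vanishes for a single petal and does not decrease when a petal meeting
   the block in two vertices is added (strict balancedness of H1); the second is nonnegative
   by strict 2-balancedness of H2. So a maximal block with nonnegative first bracket meets
   every other petal in at most one vertex, T splits over it up to a nonnegative overlap term,
   and induction gives T >= 0, with equality exactly when the petals meet Z only in their root
   edges and are otherwise disjoint, i.e. for the members of H*. Hence e+/v+ = lam on H* and
   e+/v+ > lam outside it. *)

lemma card_Int_le_1_if_card_2: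
  assumes a: "card a = 2" and b: "card b = 2" and "a \<noteq> b"
  shows "card (a \<inter> b) \<le> 1"
proof (rule ccontr)
  assume gt: "\<not> ?thesis"
  have "finite a" "finite b" using a b card.infinite by fastforce+
  have "card (a \<inter> b) = 2"
    using gt card_mono[OF \<open>finite a\<close>, of "a \<inter> b"] a by simp
  then have "a \<inter> b = a" "a \<inter> b = b"
    using a b \<open>finite a\<close> \<open>finite b\<close> by (metis card_subset_eq inf_le1 inf_le2)+
  with \<open>a \<noteq> b\<close> show False by simp
qed

lemma card_Un_ge_3_if_card_2:
  assumes "card a = 2" "card b = 2" "a \<noteq> b"
  shows "card (a \<union> b) \<ge> 3"
proof -
  have "finite a" "finite b" using assms card.infinite by fastforce+
  then have "card (a \<union> b) + card (a \<inter> b) = 4" using card_Un_Int assms(1,2) by fastforce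
  then show ?thesis using card_Int_le_1_if_card_2[OF assms] by linarith
qed

lemma real_card_Un:
  "finite A \<Longrightarrow> finite B \<Longrightarrow>
    real (card (A \<union> B)) = real (card A) + real (card B) - real (card (A \<inter> B))"
  using card_Un_Int[of A B] by simp

(* I plays the inner edges, Z the vertex set of the copy of H2, HV i and HE i the vertices and
   edges of the copy of H1 attached at i; lam = m2(H1,H2) and m = m2(H2). Below, excess is T
   from the header, and surplus and core_gap are its two brackets. *)
locale petal_family =
  fixes I :: "'a set set" and Z :: "'a set"
    and HV :: "'a set \<Rightarrow> 'a set" and HE :: "'a set \<Rightarrow> 'a set set"
    and lam m :: real
  assumes finite_I: "finite I"
    and finite_HV: "i \<in> I \<Longrightarrow> finite (HV i)"
    and petal_edge: "i \<in> I \<Longrightarrow> e \<in> HE i \<Longrightarrow> e \<subseteq> HV i \<and> card e = 2"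
    and root_in_petal: "i \<in> I \<Longrightarrow> i \<in> HE i"
    and root_in_core: "i \<in> I \<Longrightarrow> i \<subseteq> Z"
    and petal_density: "\<lbrakk>i \<in> I; W \<subseteq> HV i; EK \<subseteq> HE i; \<forall>e\<in>EK. e \<subseteq> W; card W \<ge> 2\<rbrakk>
        \<Longrightarrow> real (card EK) \<le> lam * (real (card W) - 2 + 1/m)"
    and petal_extremal: "i \<in> I \<Longrightarrow> real (card (HE i)) = lam * (real (card (HV i)) - 2 + 1/m)"
    and core_density: "\<lbrakk>S \<subseteq> I; S \<noteq> {}; \<Union>S \<subseteq> W; W \<subseteq> Z; card W \<ge> 3\<rbrakk>
        \<Longrightarrow> real (card S) - 1 < m * (real (card W) - 2)"
    and lam_pos: "lam > 0" and m_pos: "m > 0"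
begin

definition petal_verts :: "'a set set \<Rightarrow> 'a set" where
  "petal_verts S = \<Union>(HV ` S)"

definition petal_edges :: "'a set set \<Rightarrow> 'a set set" where
  "petal_edges S = \<Union>(HE ` S)"

definition outer_verts :: "'a set set \<Rightarrow> 'a set" where
  "outer_verts S = petal_verts S - Z"

definition core_verts :: "'a set set \<Rightarrow> 'a set" where
  "core_verts S = petal_verts S \<inter> Z"

definition excess :: "'a set set \<Rightarrow> real" where
  "excess S = real (card (petal_edges S)) - lam * real (card (outer_verts S)) - lam * real (card S) / m"

definition surplus :: "'a set set \<Rightarrow> real" where
  "surplus S = real (card (petal_edges S)) - lam * (real (card (petal_verts S)) - 2 + 1/m)"

definition core_gap :: "'a set set \<Rightarrow> real" where
  "core_gap S = real (card (core_verts S)) - 2 + 1/m - real (card S) / m"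

definition disjoint_petals :: bool where
  "disjoint_petals \<longleftrightarrow> (\<forall>i\<in>I. HV i \<inter> Z = i) \<and>
     (\<forall>i\<in>I. \<forall>j\<in>I. i \<noteq> j \<longrightarrow> (HV i - Z) \<inter> (HV j - Z) = {})"

lemma finite_HE: "i \<in> I \<Longrightarrow> finite (HE i)"
  by (rule finite_subset[of _ "Pow (HV i)"]) (use petal_edge finite_HV in auto)

lemma finite_petal_verts: "S \<subseteq> I \<Longrightarrow> finite (petal_verts S)"
  unfolding petal_verts_def using finite_subset[OF _ finite_I] finite_HV by auto

lemma finite_petal_edges: "S \<subseteq> I \<Longrightarrow> finite (petal_edges S)"
  unfolding petal_edges_def using finite_subset[OF _ finite_I] finite_HE by auto

lemma card_root: "i \<in> I \<Longrightarrow> card i = 2"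
  using petal_edge root_in_petal by blast

lemma root_subset_core_verts: "i \<in> S \<Longrightarrow> S \<subseteq> I \<Longrightarrow> i \<subseteq> core_verts S"
  unfolding core_verts_def petal_verts_def using petal_edge root_in_petal root_in_core by blast

lemma petal_edge_subset_petal_verts: "S \<subseteq> I \<Longrightarrow> e \<in> petal_edges S \<Longrightarrow> e \<subseteq> petal_verts S"
  unfolding petal_edges_def petal_verts_def using petal_edge by blast

lemma excess_eq_surplus_core_gap: "S \<subseteq> I \<Longrightarrow> excess S = surplus S + lam * core_gap S"
proof -
  assume "S \<subseteq> I"
  have "petal_verts S = outer_verts S \<union> core_verts S" "outer_verts S \<inter> core_verts S = {}"
    unfolding outer_verts_def core_verts_def by auto
  then have "card (petal_verts S) = card (outer_verts S) + card (core_verts S)"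
    using finite_petal_verts[OF \<open>S \<subseteq> I\<close>] by (simp add: card_Un_disjoint)
  then show ?thesis
    unfolding excess_def surplus_def core_gap_def by (simp add: algebra_simps)
qed

lemma core_gap_pos:
  assumes "S \<subseteq> I" "S \<noteq> {}" "card (core_verts S) \<ge> 3"
  shows "core_gap S > 0"
proof -
  have "\<Union>S \<subseteq> core_verts S" using root_subset_core_verts[OF _ \<open>S \<subseteq> I\<close>] by blast
  then have "real (card S) - 1 < m * (real (card (core_verts S)) - 2)"
    using core_density[OF assms(1,2)] assms(3) unfolding core_verts_def by blast
  then have "(real (card S) - 1) / m < real (card (core_verts S)) - 2"
    using m_pos by (simp add: pos_divide_less_eq mult.commute)
  then show ?thesis by (simp add: core_gap_def diff_divide_distrib)
qed

lemma core_gap_nonneg: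
  assumes "S \<subseteq> I" "S \<noteq> {}"
  shows "core_gap S \<ge> 0"
proof (cases "card (core_verts S) \<ge> 3")
  case True
  then show ?thesis using core_gap_pos[OF assms] by simp
next
  case False
  obtain i where "i \<in> S" using assms(2) by blast
  have fin: "finite (core_verts S)"
    using finite_petal_verts[OF assms(1)] unfolding core_verts_def by simp
  have "card i \<le> card (core_verts S)"
    by (rule card_mono[OF fin root_subset_core_verts[OF \<open>i \<in> S\<close> assms(1)]])
  with False have card2: "card (core_verts S) = 2"
    using card_root \<open>i \<in> S\<close> assms(1) by fastforce
  have "S \<subseteq> {core_verts S}"
  proof
    fix j assume "j \<in> S"
    then have "j \<subseteq> core_verts S" "card j = card (core_verts S)"
      using root_subset_core_verts card_root card2 assms(1) by auto
    then show "j \<in> {core_verts S}" using card_subset_eq[OF fin] by blast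
  qed
  then have "card S \<le> 1" using card_mono[of "{core_verts S}" S] by simp
  then have "real (card S) / m \<le> 1 / m" using m_pos by (simp add: divide_right_mono)
  then show ?thesis unfolding core_gap_def card2 by simp
qed

lemma surplus_singleton: "i \<in> I \<Longrightarrow> surplus {i} = 0"
  unfolding surplus_def petal_edges_def petal_verts_def using petal_extremal by simp

lemma surplus_le_surplus_insert:
  assumes B: "B \<subseteq> I" and j: "j \<in> I" and meet: "card (HV j \<inter> petal_verts B) \<ge> 2"
  shows "surplus B \<le> surplus (insert j B)"
proof -
  define W where "W = HV j \<inter> petal_verts B"
  define EK where "EK = HE j \<inter> petal_edges B"
  have "\<forall>e\<in>EK. e \<subseteq> W"
    unfolding EK_def W_def using petal_edge[OF j] petal_edge_subset_petal_verts[OF B] by blast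
  then have shared: "real (card EK) \<le> lam * (real (card W) - 2 + 1/m)"
    using meet by (intro petal_density[OF j]) (auto simp: W_def EK_def)
  have "petal_edges (insert j B) = HE j \<union> petal_edges B"
    "petal_verts (insert j B) = HV j \<union> petal_verts B"
    unfolding petal_edges_def petal_verts_def by simp_all
  then have e: "real (card (petal_edges (insert j B)))
      = real (card (HE j)) + real (card (petal_edges B)) - real (card EK)"
    and v: "real (card (petal_verts (insert j B)))
      = real (card (HV j)) + real (card (petal_verts B)) - real (card W)"
    unfolding EK_def W_def
    using real_card_Un[OF finite_HE[OF j] finite_petal_edges[OF B]]
      real_card_Un[OF finite_HV[OF j] finite_petal_verts[OF B]]
    by simp_all
  have "surplus (insert j B) - surplus B = lam * (real (card W) - 2 + 1/m) - real (card EK)"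
    unfolding surplus_def e v using petal_extremal[OF j] by (simp add: algebra_simps)
  with shared show ?thesis by linarith
qed

lemma excess_split:
  assumes S: "S \<subseteq> I" and B: "B \<subseteq> S"
    and sparse: "\<forall>j\<in>S - B. card (HV j \<inter> petal_verts B) \<le> 1"
  shows "excess S = excess B + excess (S - B)
    + lam * real (card (outer_verts B \<inter> outer_verts (S - B)))"
proof -
  have BI: "B \<subseteq> I" and RI: "S - B \<subseteq> I" using S B by auto
  have disj: "petal_edges B \<inter> petal_edges (S - B) = {}"
  proof (rule equals0I)
    fix e assume e: "e \<in> petal_edges B \<inter> petal_edges (S - B)"
    then obtain j where j: "j \<in> S - B" "e \<in> HE j" unfolding petal_edges_def by blast
    have "e \<subseteq> HV j \<inter> petal_verts B" "card e = 2"
      using petal_edge[of j e] j S e petal_edge_subset_petal_verts[OF BI] by auto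
    then have "2 \<le> card (HV j \<inter> petal_verts B)"
      using card_mono[of "HV j \<inter> petal_verts B" e] finite_HV j S by auto
    moreover have "card (HV j \<inter> petal_verts B) \<le> 1" using sparse j(1) by blast
    ultimately show False by linarith
  qed
  have "petal_edges S = petal_edges B \<union> petal_edges (S - B)"
    "outer_verts S = outer_verts B \<union> outer_verts (S - B)"
    unfolding petal_edges_def outer_verts_def petal_verts_def using B by auto
  then have e: "real (card (petal_edges S))
      = real (card (petal_edges B)) + real (card (petal_edges (S - B)))"
    and v: "real (card (outer_verts S))
      = real (card (outer_verts B)) + real (card (outer_verts (S - B)))
        - real (card (outer_verts B \<inter> outer_verts (S - B)))"
    using finite_petal_edges[OF BI] finite_petal_edges[OF RI] disj
      finite_petal_verts[OF BI] finite_petal_verts[OF RI]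
    by (simp_all add: card_Un_disjoint real_card_Un outer_verts_def)
  have "card S = card B + card (S - B)"
    using card_Diff_subset[OF finite_subset[OF BI finite_I] B]
      card_mono[OF finite_subset[OF S finite_I] B] by simp
  then show ?thesis
    unfolding excess_def e v by (simp add: algebra_simps add_divide_distrib)
qed

lemma closed_block_exists:
  assumes S: "S \<subseteq> I" and i0: "i0 \<in> S"
  obtains B where "B \<subseteq> S" "i0 \<in> B" "surplus B \<ge> 0"
    "\<forall>j\<in>S - B. card (HV j \<inter> petal_verts B) \<le> 1"
proof -
  let ?P = "\<lambda>B. B \<subseteq> S \<and> i0 \<in> B \<and> surplus B \<ge> 0"
  have finS: "finite S" using finite_subset[OF S finite_I] .
  have "?P {i0}" using surplus_singleton i0 S by auto
  moreover have "\<forall>B. ?P B \<longrightarrow> card B < Suc (card S)"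
    using card_mono[OF finS] by (simp add: le_imp_less_Suc)
  ultimately have "\<exists>B. ?P B \<and> (\<forall>B'. ?P B' \<longrightarrow> card B' \<le> card B)"
    by (rule Lattices_Big.ex_has_greatest_nat)
  then obtain B where B: "?P B" and maximal: "\<And>B'. ?P B' \<Longrightarrow> card B' \<le> card B"
    by blast
  have "card (HV j \<inter> petal_verts B) \<le> 1" if j: "j \<in> S - B" for j
  proof (rule ccontr)
    assume "\<not> ?thesis"
    then have "surplus B \<le> surplus (insert j B)"
      using surplus_le_surplus_insert[of B j] B j S by auto
    then have "card (insert j B) \<le> card B" using maximal B j by auto
    then show False using j finite_subset[OF _ finS] B by auto
  qed
  then show thesis using that B by blast
qed

lemma excess_ge_surplus: "B \<subseteq> I \<Longrightarrow> B \<noteq> {} \<Longrightarrow> surplus B \<le> excess B"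
  using excess_eq_surplus_core_gap core_gap_nonneg lam_pos by simp

lemma excess_gt_surplus:
  "B \<subseteq> I \<Longrightarrow> B \<noteq> {} \<Longrightarrow> card (core_verts B) \<ge> 3 \<Longrightarrow> surplus B < excess B"
  using excess_eq_surplus_core_gap core_gap_pos lam_pos by simp

lemma excess_nonneg: "S \<subseteq> I \<Longrightarrow> excess S \<ge> 0"
proof (induction "card S" arbitrary: S rule: less_induct)
  case less
  show ?case
  proof (cases "S = {}")
    case True
    then show ?thesis by (simp add: excess_def petal_edges_def outer_verts_def petal_verts_def)
  next
    case False
    then obtain i0 where "i0 \<in> S" by blast
    then obtain B where B: "B \<subseteq> S" "i0 \<in> B" "surplus B \<ge> 0"
      "\<forall>j\<in>S - B. card (HV j \<inter> petal_verts B) \<le> 1"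
      using closed_block_exists[OF less.prems] by blast
    have "excess B \<ge> 0" using excess_ge_surplus[of B] B less.prems by force
    moreover have "card (S - B) < card S"
      using B finite_subset[OF less.prems finite_I] by (intro psubset_card_mono) auto
    then have "excess (S - B) \<ge> 0" using less.hyps less.prems by blast
    moreover have "lam * real (card (outer_verts B \<inter> outer_verts (S - B))) \<ge> 0"
      using lam_pos by simp
    ultimately show ?thesis using excess_split[OF less.prems B(1,4)] by linarith
  qed
qed

lemma excess_pos_if_closed_block:
  assumes B: "B \<subseteq> I" "i0 \<in> B" "surplus B \<ge> 0"
    "\<forall>j\<in>I - B. card (HV j \<inter> petal_verts B) \<le> 1"
    and strict: "card (core_verts B) \<ge> 3 \<or> outer_verts B \<inter> outer_verts (I - B) \<noteq> {}"
  shows "excess I > 0"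
proof -
  have "excess B \<ge> 0" using excess_ge_surplus[of B] B by force
  moreover have "excess (I - B) \<ge> 0" using excess_nonneg[of "I - B"] by blast
  moreover have "excess B > 0 \<or> lam * real (card (outer_verts B \<inter> outer_verts (I - B))) > 0"
  proof (cases "card (core_verts B) \<ge> 3")
    case True
    then show ?thesis using excess_gt_surplus[of B] B by force
  next
    case False
    then have "card (outer_verts B \<inter> outer_verts (I - B)) > 0"
      using strict finite_petal_verts[OF B(1)] by (simp add: outer_verts_def card_gt_0_iff)
    then show ?thesis using lam_pos by simp
  qed
  moreover have "lam * real (card (outer_verts B \<inter> outer_verts (I - B))) \<ge> 0"
    using lam_pos by simp
  ultimately show ?thesis using excess_split[OF order_refl B(1,4)] by (elim disjE; linarith)
qed

lemma excess_pos_if_petal_meets_core: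
  assumes i0: "i0 \<in> I" and "HV i0 \<inter> Z \<noteq> i0"
  shows "excess I > 0"
proof -
  obtain B where B: "B \<subseteq> I" "i0 \<in> B" "surplus B \<ge> 0"
    "\<forall>j\<in>I - B. card (HV j \<inter> petal_verts B) \<le> 1"
    using closed_block_exists[OF order_refl i0] by blast
  have "i0 \<subset> HV i0 \<inter> Z" using assms petal_edge[OF _ root_in_petal] root_in_core by blast
  moreover have "HV i0 \<inter> Z \<subseteq> core_verts B"
    using B(2) unfolding core_verts_def petal_verts_def by blast
  ultimately have "card i0 < card (core_verts B)"
    using finite_petal_verts[OF B(1)] unfolding core_verts_def
    by (intro psubset_card_mono) (auto dest: psubset_subset_trans)
  then show ?thesis using excess_pos_if_closed_block[OF B] card_root[OF i0] by simp
qed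

lemma excess_pos_if_petals_overlap:
  assumes ij: "i0 \<in> I" "j0 \<in> I" "i0 \<noteq> j0" and x: "x \<in> HV i0" "x \<in> HV j0" "x \<notin> Z"
  shows "excess I > 0"
proof -
  obtain B where B: "B \<subseteq> I" "i0 \<in> B" "surplus B \<ge> 0"
    "\<forall>j\<in>I - B. card (HV j \<inter> petal_verts B) \<le> 1"
    using closed_block_exists[OF order_refl ij(1)] by blast
  show ?thesis
  proof (cases "j0 \<in> B")
    case True
    have "i0 \<union> j0 \<subseteq> core_verts B"
      using root_subset_core_verts[OF _ B(1)] B(2) True by blast
    then have "card (i0 \<union> j0) \<le> card (core_verts B)"
      using finite_petal_verts[OF B(1)] unfolding core_verts_def by (simp add: card_mono)
    then have "card (core_verts B) \<ge> 3"
      using card_Un_ge_3_if_card_2[of i0 j0] card_root ij by fastforce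
    then show ?thesis using excess_pos_if_closed_block[OF B] by blast
  next
    case False
    then have "x \<in> outer_verts B \<inter> outer_verts (I - B)"
      using ij x B(2) unfolding outer_verts_def petal_verts_def by blast
    then show ?thesis using excess_pos_if_closed_block[OF B] by blast
  qed
qed

lemma excess_pos_if_not_disjoint_petals: "\<not> disjoint_petals \<Longrightarrow> excess I > 0"
  unfolding disjoint_petals_def
  using excess_pos_if_petal_meets_core excess_pos_if_petals_overlap by blast

lemma excess_singleton: "i \<in> I \<Longrightarrow> HV i \<inter> Z = i \<Longrightarrow> excess {i} = 0"
  using excess_eq_surplus_core_gap[of "{i}"] surplus_singleton card_root
  by (simp add: core_gap_def core_verts_def petal_verts_def)

lemma excess_eq_0_if_disjoint_petals:
  assumes disj: "disjoint_petals"
  shows "S \<subseteq> I \<Longrightarrow> excess S = 0"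
proof (induction "card S" arbitrary: S rule: less_induct)
  case less
  show ?case
  proof (cases "S = {}")
    case True
    then show ?thesis by (simp add: excess_def petal_edges_def outer_verts_def petal_verts_def)
  next
    case False
    then obtain i0 where i0: "i0 \<in> S" by blast
    have i0I: "i0 \<in> I" using i0 less.prems by blast
    have core: "HV i \<inter> Z = i" if "i \<in> I" for i
      using disj that unfolding disjoint_petals_def by blast
    have outer: "(HV i - Z) \<inter> (HV j - Z) = {}" if "i \<in> I" "j \<in> I" "i \<noteq> j" for i j
      using disj that unfolding disjoint_petals_def by blast
    have "card (HV j \<inter> petal_verts {i0}) \<le> 1" if j: "j \<in> S - {i0}" for j
    proof -
      have "j \<in> I" "j \<noteq> i0" using j less.prems by auto
      then have "HV j \<inter> petal_verts {i0} \<subseteq> j \<inter> i0"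
        using core[of j] core[of i0] outer[of j i0] i0I unfolding petal_verts_def by blast
      moreover have "card (j \<inter> i0) \<le> 1"
        using card_Int_le_1_if_card_2 card_root \<open>j \<in> I\<close> \<open>j \<noteq> i0\<close> i0I by blast
      moreover have "finite (j \<inter> i0)"
        using card_root[OF \<open>j \<in> I\<close>] by (simp add: card_ge_0_finite)
      ultimately show ?thesis by (meson card_mono order_trans)
    qed
    then have split: "excess S = excess {i0} + excess (S - {i0})
        + lam * real (card (outer_verts {i0} \<inter> outer_verts (S - {i0})))"
      using excess_split[OF less.prems] i0 by blast
    have "outer_verts {i0} \<inter> outer_verts (S - {i0}) = {}"
      using outer[OF i0I] less.prems unfolding outer_verts_def petal_verts_def by blast
    moreover have "excess {i0} = 0" by (rule excess_singleton[OF i0I core[OF i0I]])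
    moreover have "excess (S - {i0}) = 0"
      using less.hyps less.prems card_Diff1_less[OF finite_subset[OF less.prems finite_I] i0] by blast
    ultimately show ?thesis using split by simp
  qed
qed

lemma excess_eq_0_iff_disjoint_petals: "excess I = 0 \<longleftrightarrow> disjoint_petals"
  using excess_pos_if_not_disjoint_petals excess_eq_0_if_disjoint_petals[OF _ order_refl]
  by (cases disjoint_petals) auto

end

lemma wf_graph_edgeD:
  assumes "wf_graph G" "e \<in> edges G"
  shows "e \<subseteq> verts G" "card e = 2"
  using assms unfolding wf_graph_def by auto

lemma wf_graph_finite_verts: "wf_graph G \<Longrightarrow> finite (verts G)"
  unfolding wf_graph_def by blast

lemma wf_graph_finite_edges: "wf_graph G \<Longrightarrow> finite (edges G)"
  by (rule finite_subset[of _ "Pow (verts G)"])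
    (auto dest: wf_graph_edgeD simp: wf_graph_finite_verts)

lemma finite_subgraphs:
  assumes "wf_graph H"
  shows "finite {J. subgraph J H}"
proof (rule finite_subset)
  show "{J. subgraph J H} \<subseteq> Pow (verts H) \<times> Pow (edges H)"
    by (auto simp: subgraph_def verts_def edges_def mem_Times_iff)
  show "finite (Pow (verts H) \<times> Pow (edges H))"
    using wf_graph_finite_verts[OF assms] wf_graph_finite_edges[OF assms] by simp
qed

lemma subgraph_refl: "wf_graph H \<Longrightarrow> subgraph H H"
  unfolding subgraph_def by simp

lemma nonempty_graph_vnum_enum:
  assumes "wf_graph H" "nonempty_graph H"
  shows "vnum H \<ge> 2" "enum H \<ge> 1"
proof -
  obtain e where e: "e \<in> edges H" using assms(2) unfolding nonempty_graph_def by blast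
  have "card e \<le> card (verts H)"
    using card_mono[OF wf_graph_finite_verts[OF assms(1)] wf_graph_edgeD(1)[OF assms(1) e]] .
  then show "vnum H \<ge> 2" using wf_graph_edgeD(2)[OF assms(1) e] unfolding vnum_def by simp
  have "card (edges H) > 0" using e wf_graph_finite_edges[OF assms(1)] by (auto simp: card_gt_0_iff)
  then show "enum H \<ge> 1" unfolding enum_def by simp
qed

lemma iso_sym:
  assumes "iso G H"
  shows "iso H G"
proof -
  obtain \<phi> where bij: "bij_betw \<phi> (verts G) (verts H)"
    and edge: "\<forall>u\<in>verts G. \<forall>v\<in>verts G. {u, v} \<in> edges G \<longleftrightarrow> {\<phi> u, \<phi> v} \<in> edges H"
    using assms unfolding iso_def by blast
  let ?\<psi> = "inv_into (verts G) \<phi>"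
  have "bij_betw ?\<psi> (verts H) (verts G)" by (rule bij_betw_inv_into[OF bij])
  moreover have "{u, v} \<in> edges H \<longleftrightarrow> {?\<psi> u, ?\<psi> v} \<in> edges G"
    if "u \<in> verts H" "v \<in> verts H" for u v
  proof -
    have "?\<psi> u \<in> verts G" "?\<psi> v \<in> verts G" "\<phi> (?\<psi> u) = u" "\<phi> (?\<psi> v) = v"
      using bij_betw_apply[OF bij_betw_inv_into[OF bij]] bij_betw_inv_into_right[OF bij] that
      by auto
    then show ?thesis using edge by metis
  qed
  ultimately show ?thesis unfolding iso_def by blast
qed

lemma iso_edge_image:
  assumes bij: "bij_betw \<phi> (verts G) (verts H)"
    and edge: "\<forall>u\<in>verts G. \<forall>v\<in>verts G. {u, v} \<in> edges G \<longleftrightarrow> {\<phi> u, \<phi> v} \<in> edges H"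
    and "wf_graph G" "e \<in> edges G"
  shows "\<phi> ` e \<in> edges H" "card (\<phi> ` e) = 2"
proof -
  obtain a b where ab: "e = {a, b}" "a \<noteq> b"
    using wf_graph_edgeD(2)[OF assms(3,4)] by (auto simp: card_2_iff)
  have "a \<in> verts G" "b \<in> verts G" using wf_graph_edgeD(1)[OF assms(3,4)] ab by auto
  then have "{\<phi> a, \<phi> b} \<in> edges H" "\<phi> a \<noteq> \<phi> b"
    using edge assms(4) ab inj_onD[OF bij_betw_imp_inj_on[OF bij]] by auto
  then show "\<phi> ` e \<in> edges H" "card (\<phi> ` e) = 2" using ab by simp_all
qed

lemma iso_subgraph_image:
  assumes "iso G H" "wf_graph G"
    and W: "W \<subseteq> verts G" and EK: "EK \<subseteq> edges G" and EK_W: "\<forall>e\<in>EK. e \<subseteq> W"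
  shows "\<exists>K. subgraph K H \<and> vnum K = card W \<and> enum K = card EK"
proof -
  obtain \<phi> where bij: "bij_betw \<phi> (verts G) (verts H)"
    and edge: "\<forall>u\<in>verts G. \<forall>v\<in>verts G. {u, v} \<in> edges G \<longleftrightarrow> {\<phi> u, \<phi> v} \<in> edges H"
    using assms(1) unfolding iso_def by blast
  have inj: "inj_on \<phi> (verts G)" using bij by (rule bij_betw_imp_inj_on)
  have edge_image: "\<phi> ` e \<in> edges H \<and> card (\<phi> ` e) = 2" if "e \<in> edges G" for e
    using iso_edge_image[OF bij edge assms(2) that] by blast
  define K where "K = (\<phi> ` W, image \<phi> ` EK)"
  have vK: "verts K = \<phi> ` W" and eK: "edges K = image \<phi> ` EK"
    unfolding K_def verts_def edges_def by simp_all
  have "finite W" using finite_subset[OF W wf_graph_finite_verts[OF assms(2)]] .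
  have "\<forall>e'\<in>edges K. e' \<subseteq> verts K \<and> card e' = 2"
  proof
    fix e' assume "e' \<in> edges K"
    then obtain e where e: "e \<in> EK" "e' = \<phi> ` e" unfolding eK by auto
    then have "\<phi> ` e \<subseteq> \<phi> ` W" using EK_W by (simp add: image_mono)
    then show "e' \<subseteq> verts K \<and> card e' = 2" using edge_image e EK unfolding vK by auto
  qed
  then have "wf_graph K" using \<open>finite W\<close> unfolding wf_graph_def vK by simp
  moreover have "verts K \<subseteq> verts H"
    using W bij_betw_imp_surj_on[OF bij] unfolding vK by auto
  moreover have "edges K \<subseteq> edges H" using edge_image EK unfolding eK by auto
  moreover have "vnum K = card W"
    using card_image[OF inj_on_subset[OF inj W]] unfolding vnum_def vK by simp
  moreover have "enum K = card EK"
  proof -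
    have "EK \<subseteq> Pow (verts G)" using EK wf_graph_edgeD(1)[OF assms(2)] by blast
    then show ?thesis
      using card_image[OF inj_on_subset[OF inj_on_image_Pow[OF inj]]] unfolding enum_def eK by simp
  qed
  ultimately show ?thesis unfolding subgraph_def by blast
qed

lemma iso_card_verts: "iso G H \<Longrightarrow> card (verts H) = card (verts G)"
  unfolding iso_def by (auto dest: bij_betw_same_card)

lemma iso_card_edges_le:
  assumes "iso G H" "wf_graph G" "wf_graph H"
  shows "card (edges G) \<le> card (edges H)"
proof -
  obtain K where K: "subgraph K H" "enum K = card (edges G)"
    using iso_subgraph_image[OF assms(1,2) order_refl order_refl] wf_graph_edgeD(1)[OF assms(2)]
    by blast
  then have "edges K \<subseteq> edges H" unfolding subgraph_def by blast
  from card_mono[OF wf_graph_finite_edges[OF assms(3)] this] show ?thesis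
    using K(2) unfolding enum_def by simp
qed

lemma iso_card_edges:
  assumes "iso G H" "wf_graph G" "wf_graph H"
  shows "card (edges H) = card (edges G)"
  using iso_card_edges_le[OF assms] iso_card_edges_le[OF iso_sym[OF assms(1)] assms(3,2)] by simp

lemma Max_subgraphs_eq_top:
  fixes \<delta> :: "'a graph \<Rightarrow> 'b::linorder"
  assumes "wf_graph H"
    and strict: "\<forall>J. subgraph J H \<and> J \<noteq> H \<longrightarrow> \<delta> J < Max (\<delta> ` {J. subgraph J H})"
  shows "Max (\<delta> ` {J. subgraph J H}) = \<delta> H"
proof -
  have "\<delta> ` {J. subgraph J H} \<noteq> {}" using subgraph_refl[OF assms(1)] by blast
  then have "Max (\<delta> ` {J. subgraph J H}) \<in> \<delta> ` {J. subgraph J H}"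
    by (rule Max_in[OF finite_imageI[OF finite_subgraphs[OF assms(1)]]])
  then obtain J where J: "subgraph J H" "\<delta> J = Max (\<delta> ` {J. subgraph J H})"
    by (auto simp del: Max_in)
  have "J = H"
  proof (rule ccontr)
    assume "J \<noteq> H"
    then have "\<delta> J < Max (\<delta> ` {J. subgraph J H})" using strict J(1) by blast
    with J(2) show False by simp
  qed
  with J(2) show ?thesis by simp
qed

lemma m2_eq_d2:
  assumes "wf_graph H" "strictly_2_balanced H"
  shows "m2 H = d2 H"
  using Max_subgraphs_eq_top[OF assms(1), of d2] assms(2)
  unfolding m2_def strictly_2_balanced_def by blast

lemma m2_asym_eq_d2_asym:
  assumes "wf_graph H1" "strictly_balanced_wrt H1 H2"
  shows "m2_asym H1 H2 = d2_asym H1 H2"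
  using Max_subgraphs_eq_top[OF assms(1), of "\<lambda>J. d2_asym J H2"] assms(2)
  unfolding m2_asym_def strictly_balanced_wrt_def by blast

lemma d2_asym_le_m2_asym:
  assumes "wf_graph H1" "subgraph J H1"
  shows "d2_asym J H2 \<le> m2_asym H1 H2"
  unfolding m2_asym_def using assms(2)
  by (intro Max_ge finite_imageI finite_subgraphs[OF assms(1)]) simp

lemma proper_subgraph_density_lt_m2:
  assumes "strictly_2_balanced H" "subgraph K H" "K \<noteq> H" "nonempty_graph K" "vnum K \<ge> 3"
  shows "real (enum K) - 1 < m2 H * (real (vnum K) - 2)"
proof -
  have "d2 K < m2 H" using assms(1-3) unfolding strictly_2_balanced_def by blast
  moreover have "d2 K = (real (enum K) - 1) / (real (vnum K) - 2)"
    using assms(4,5) unfolding d2_def by simp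
  moreover have "real (vnum K) - 2 > 0" using assms(5) by simp
  ultimately show ?thesis by (simp add: pos_divide_less_eq mult.commute)
qed

lemma subgraph_density_le_m2_asym:
  assumes "wf_graph H1" "nonempty_graph H2" "m2 H2 > 0" "subgraph K H1" "vnum K \<ge> 2"
  shows "real (enum K) \<le> m2_asym H1 H2 * (real (vnum K) - 2 + 1 / m2 H2)"
proof -
  have "d2_asym K H2 \<le> m2_asym H1 H2" by (rule d2_asym_le_m2_asym[OF assms(1,4)])
  moreover have "d2_asym K H2 = real (enum K) / (real (vnum K) - 2 + 1 / m2 H2)"
    using assms(2,5) unfolding d2_asym_def by simp
  moreover have "real (vnum K) - 2 + 1 / m2 H2 > 0"
    using assms(5) divide_pos_pos[OF zero_less_one assms(3)] by linarith
  ultimately show ?thesis by (simp add: pos_divide_le_eq)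
qed

lemma construction_core:
  assumes "construction F eh H1 H2 J Hh Hf"
  shows "wf_graph Hh" "iso H2 Hh" "edges Hh \<inter> edges F = {eh}" "verts Hh \<inter> verts F = eh"
  using assms unfolding construction_def by blast+

lemma construction_petal:
  assumes "construction F eh H1 H2 J Hh Hf" "f \<in> edges Hh - {eh}"
  shows "wf_graph (Hf f)" "iso H1 (Hf f)" "edges (Hf f) \<inter> (edges F \<union> edges Hh) = {f}"
    "(verts F - eh) \<inter> verts (Hf f) = {}"
  using assms unfolding construction_def by blast+

lemma construction_graph:
  assumes "construction F eh H1 H2 J Hh Hf"
  shows "verts J = verts F \<union> verts Hh \<union> (\<Union>f \<in> edges Hh - {eh}. verts (Hf f))"
    "edges J = edges F \<union> edges Hh \<union> (\<Union>f \<in> edges Hh - {eh}. edges (Hf f))"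
  using assms unfolding construction_def verts_def edges_def by auto

lemma construction_root:
  assumes "construction F eh H1 H2 J Hh Hf" "f \<in> edges Hh - {eh}"
  shows "f \<in> edges (Hf f)" "f \<subseteq> verts (Hf f)" "f \<subseteq> verts Hh" "card f = 2"
proof -
  show "f \<in> edges (Hf f)" using construction_petal(3)[OF assms] by blast
  then show "f \<subseteq> verts (Hf f)" by (rule wf_graph_edgeD[OF construction_petal(1)[OF assms]])
  show "f \<subseteq> verts Hh" "card f = 2"
    using assms(2) wf_graph_edgeD[OF construction_core(1)[OF assms(1)]] by auto
qed

lemma eplus_construction:
  assumes "construction F eh H1 H2 J Hh Hf"
  shows "eplus F J = card (\<Union>f \<in> edges Hh - {eh}. edges (Hf f))"
proof -
  have "edges J - edges F = (\<Union>f \<in> edges Hh - {eh}. edges (Hf f))"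
  proof
    show "edges J - edges F \<subseteq> (\<Union>f \<in> edges Hh - {eh}. edges (Hf f))"
      using construction_graph(2)[OF assms] construction_core(3)[OF assms]
        construction_root(1)[OF assms] by blast
    show "(\<Union>f \<in> edges Hh - {eh}. edges (Hf f)) \<subseteq> edges J - edges F"
    proof
      fix e assume "e \<in> (\<Union>f \<in> edges Hh - {eh}. edges (Hf f))"
      then obtain f where f: "f \<in> edges Hh - {eh}" "e \<in> edges (Hf f)" by blast
      have "e \<notin> edges F"
      proof
        assume "e \<in> edges F"
        then have "e = f" using construction_petal(3)[OF assms f(1)] f(2) by blast
        then have "f \<in> edges Hh \<inter> edges F" using f(1) \<open>e \<in> edges F\<close> by blast
        then show False using construction_core(3)[OF assms] f(1) by blast
      qed
      then show "e \<in> edges J - edges F" using construction_graph(2)[OF assms] f by blast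
    qed
  qed
  then show ?thesis unfolding eplus_def by simp
qed

lemma vplus_construction:
  assumes "construction F eh H1 H2 J Hh Hf"
  shows "vplus F J = (card (verts Hh) - 2) + card ((\<Union>f \<in> edges Hh - {eh}. verts (Hf f)) - verts Hh)"
proof -
  define U where "U = (\<Union>f \<in> edges Hh - {eh}. verts (Hf f))"
  note core = construction_core[OF assms]
  have "eh \<in> edges Hh" using core(3) by blast
  then have eh: "eh \<subseteq> verts Hh" "card eh = 2" by (rule wf_graph_edgeD[OF core(1)])+
  have new_verts: "verts J - verts F = (verts Hh - eh) \<union> (U - verts Hh)"
    using construction_graph(1)[OF assms] core(4) construction_petal(4)[OF assms]
    unfolding U_def by blast
  have "finite U"
    unfolding U_def using wf_graph_finite_edges[OF core(1)] wf_graph_finite_verts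
      construction_petal(1)[OF assms] by blast
  then have "card ((verts Hh - eh) \<union> (U - verts Hh)) = card (verts Hh - eh) + card (U - verts Hh)"
    using wf_graph_finite_verts[OF core(1)] by (intro card_Un_disjoint) auto
  then have "vplus F J = card (verts Hh - eh) + card (U - verts Hh)"
    unfolding vplus_def new_verts .
  then show ?thesis
    unfolding U_def using eh card_Diff_subset[OF finite_subset[OF eh(1) wf_graph_finite_verts[OF core(1)]]]
    by simp
qed

lemma common_edge_eq_attachment_edge:
  assumes "wf_graph G1" "wf_graph G2" "e \<in> edges G1" "e \<in> edges G2"
    and "verts G1 \<inter> Z = f" "card f = 2" "(verts G1 - Z) \<inter> (verts G2 - Z) = {}"
  shows "e = f"
proof -
  have "e \<subseteq> verts G1" "e \<subseteq> verts G2" "card e = 2"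
    using wf_graph_edgeD assms(1-4) by blast+
  then have "e \<subseteq> f" using assms(5,7) by blast
  moreover have "finite f" using assms(6) by (intro card_ge_0_finite) simp
  ultimately show ?thesis using card_subset_eq \<open>card e = 2\<close> assms(6) by metis
qed

lemma star_conditions_iff_disjoint_petals:
  assumes c: "construction F eh H1 H2 J Hh Hf"
  shows "star_conditions eh Hh Hf \<longleftrightarrow>
    (\<forall>f\<in>edges Hh - {eh}. verts (Hf f) \<inter> verts Hh = f) \<and>
    (\<forall>f1\<in>edges Hh - {eh}. \<forall>f2\<in>edges Hh - {eh}. f1 \<noteq> f2 \<longrightarrow>
      (verts (Hf f1) - verts Hh) \<inter> (verts (Hf f2) - verts Hh) = {})"
    (is "_ \<longleftrightarrow> ?disjoint")
proof
  assume "star_conditions eh Hh Hf"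
  then have U: "\<lbrakk>f1 \<in> edges Hh - {eh}; f2 \<in> edges Hh - {eh}; f1 \<noteq> f2\<rbrakk>
      \<Longrightarrow> (verts (Hf f1) - f1) \<inter> (verts (Hf f2) - f2) = {}"
    and Z: "f \<in> edges Hh - {eh} \<Longrightarrow> (verts (Hf f) - f) \<inter> verts Hh = {}" for f f1 f2
    unfolding star_conditions_def by blast+
  show ?disjoint
  proof (intro conjI ballI impI)
    fix f assume f: "f \<in> edges Hh - {eh}"
    show "verts (Hf f) \<inter> verts Hh = f" using Z[OF f] construction_root(2,3)[OF c f] by blast
  next
    fix f1 f2 assume f: "f1 \<in> edges Hh - {eh}" "f2 \<in> edges Hh - {eh}" "f1 \<noteq> f2"
    show "(verts (Hf f1) - verts Hh) \<inter> (verts (Hf f2) - verts Hh) = {}"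
      using U[OF f] construction_root(3)[OF c f(1)] construction_root(3)[OF c f(2)] by blast
  qed
next
  assume ?disjoint
  then have core: "f \<in> edges Hh - {eh} \<Longrightarrow> verts (Hf f) \<inter> verts Hh = f"
    and outer: "\<lbrakk>f1 \<in> edges Hh - {eh}; f2 \<in> edges Hh - {eh}; f1 \<noteq> f2\<rbrakk>
      \<Longrightarrow> (verts (Hf f1) - verts Hh) \<inter> (verts (Hf f2) - verts Hh) = {}" for f f1 f2
    by blast+
  show "star_conditions eh Hh Hf" unfolding star_conditions_def
  proof (intro conjI ballI impI)
    fix f1 f2 assume f: "f1 \<in> edges Hh - {eh}" "f2 \<in> edges Hh - {eh}" "f1 \<noteq> f2"
    show "(verts (Hf f1) - f1) \<inter> (verts (Hf f2) - f2) = {}"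
      using core[OF f(1)] core[OF f(2)] outer[OF f] by blast
    show "(edges (Hf f1) - {f1}) \<inter> (edges (Hf f2) - {f2}) = {}"
      using common_edge_eq_attachment_edge[OF construction_petal(1)[OF c f(1)]
          construction_petal(1)[OF c f(2)] _ _ core[OF f(1)] construction_root(4)[OF c f(1)] outer[OF f]]
      by blast
  next
    fix f assume f: "f \<in> edges Hh - {eh}"
    show "(verts (Hf f) - f) \<inter> verts Hh = {}" using core[OF f] by blast
  qed
qed

context
  fixes H1 :: "'b graph" and H2 :: "'c graph"
  assumes wf_H1: "wf_graph H1" and wf_H2: "wf_graph H2"
    and nonempty_H1: "nonempty_graph H1" and nonempty_H2: "nonempty_graph H2"
    and m2_H2_gt_1: "m2 H2 > 1"
    and balanced_H2: "strictly_2_balanced H2"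
    and balanced_H1: "strictly_balanced_wrt H1 H2"
begin

lemma vnum_H2_ge_3: "vnum H2 \<ge> 3"
  and enum_H2_eq: "real (enum H2) - 1 = m2 H2 * (real (vnum H2) - 2)"
proof -
  have m2: "m2 H2 = d2 H2" by (rule m2_eq_d2[OF wf_H2 balanced_H2])
  with m2_H2_gt_1 show "vnum H2 \<ge> 3" unfolding d2_def by (auto split: if_splits)
  then have "m2 H2 = (real (enum H2) - 1) / (real (vnum H2) - 2)" "real (vnum H2) - 2 > 0"
    using m2 nonempty_H2 unfolding d2_def by simp_all
  then show "real (enum H2) - 1 = m2 H2 * (real (vnum H2) - 2)" by (simp add: field_simps)
qed

lemma m2_asym_pos: "m2_asym H1 H2 > 0"
  and enum_H1_eq: "real (enum H1) = m2_asym H1 H2 * (real (vnum H1) - 2 + 1 / m2 H2)"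
proof -
  have "vnum H1 \<ge> 2" "enum H1 \<ge> 1" by (rule nonempty_graph_vnum_enum[OF wf_H1 nonempty_H1])+
  moreover have "1 / m2 H2 > 0" using m2_H2_gt_1 by simp
  ultimately have den: "real (vnum H1) - 2 + 1 / m2 H2 > 0" and "real (enum H1) > 0" by linarith+
  moreover have "m2_asym H1 H2 = real (enum H1) / (real (vnum H1) - 2 + 1 / m2 H2)"
    using m2_asym_eq_d2_asym[OF wf_H1 balanced_H1] nonempty_H2 \<open>vnum H1 \<ge> 2\<close>
    unfolding d2_asym_def by simp
  ultimately show "m2_asym H1 H2 > 0"
    and "real (enum H1) = m2_asym H1 H2 * (real (vnum H1) - 2 + 1 / m2 H2)" by simp_all
qed

lemma construction_petal_density:
  assumes c: "construction F eh H1 H2 J Hh Hf" and f: "f \<in> edges Hh - {eh}"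
    and W: "W \<subseteq> verts (Hf f)" and EK: "EK \<subseteq> edges (Hf f)" "\<forall>e\<in>EK. e \<subseteq> W"
    and "card W \<ge> 2"
  shows "real (card EK) \<le> m2_asym H1 H2 * (real (card W) - 2 + 1 / m2 H2)"
proof -
  obtain K where "subgraph K H1" "vnum K = card W" "enum K = card EK"
    using iso_subgraph_image[OF iso_sym[OF construction_petal(2)[OF c f]]
        construction_petal(1)[OF c f] W EK] by blast
  then show ?thesis
    using subgraph_density_le_m2_asym[OF wf_H1 nonempty_H2, of K] m2_H2_gt_1 \<open>card W \<ge> 2\<close> by simp
qed

lemma construction_core_density:
  assumes c: "construction F eh H1 H2 J Hh Hf"
    and S: "S \<subseteq> edges Hh - {eh}" "S \<noteq> {}" and W: "\<Union>S \<subseteq> W" "W \<subseteq> verts Hh" "card W \<ge> 3"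
  shows "real (card S) - 1 < m2 H2 * (real (card W) - 2)"
proof -
  note core = construction_core[OF c]
  obtain K where K: "subgraph K H2" "vnum K = card W" "enum K = card S"
    using iso_subgraph_image[OF iso_sym[OF core(2)] core(1) W(2), of S] S W(1) by blast
  have "finite (edges Hh)" by (rule wf_graph_finite_edges[OF core(1)])
  then have "card S < card (edges Hh)"
    using S core(3) by (intro psubset_card_mono) auto
  then have "K \<noteq> H2" using K(3) iso_card_edges[OF core(2) wf_H2 core(1)] unfolding enum_def by auto
  moreover have "card S > 0" using S \<open>finite (edges Hh)\<close> finite_subset by (auto simp: card_gt_0_iff)
  then have "nonempty_graph K" using K(3) unfolding nonempty_graph_def enum_def by auto
  ultimately show ?thesis using proper_subgraph_density_lt_m2[OF balanced_H2 K(1)] K(2,3) W(3) by simp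
qed

lemma construction_petal_family:
  assumes c: "construction F eh H1 H2 J Hh Hf"
  shows "petal_family (edges Hh - {eh}) (verts Hh) (\<lambda>f. verts (Hf f)) (\<lambda>f. edges (Hf f))
    (m2_asym H1 H2) (m2 H2)"
proof (unfold_locales, goal_cases)
  case 1
  show ?case using wf_graph_finite_edges[OF construction_core(1)[OF c]] by simp
next
  case (2 f)
  then show ?case using wf_graph_finite_verts construction_petal(1)[OF c] by blast
next
  case (3 f e)
  then show ?case using wf_graph_edgeD construction_petal(1)[OF c] by blast
next
  case (4 f)
  then show ?case by (rule construction_root(1)[OF c])
next
  case (5 f)
  then show ?case by (rule construction_root(3)[OF c])
next
  case (6 f W EK)
  then show ?case using construction_petal_density[OF c] by blast
next
  case (7 f)
  then show ?case
    using enum_H1_eq iso_card_verts[OF construction_petal(2)[OF c 7]]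
      iso_card_edges[OF construction_petal(2)[OF c 7] wf_H1 construction_petal(1)[OF c 7]]
    unfolding vnum_def enum_def by simp
next
  case (8 S W)
  then show ?case using construction_core_density[OF c] by blast
next
  case 9
  show ?case by (rule m2_asym_pos)
next
  case 10
  show ?case using m2_H2_gt_1 by simp
qed

lemma card_inner_edges_div_m2:
  assumes c: "construction F eh H1 H2 J Hh Hf"
  shows "real (card (edges Hh - {eh})) / m2 H2 = real (vnum H2) - 2"
proof -
  note core = construction_core[OF c]
  have "eh \<in> edges Hh" using core(3) by blast
  moreover have fin: "finite (edges Hh)" by (rule wf_graph_finite_edges[OF core(1)])
  ultimately have "card (edges Hh) \<ge> 1" by (metis One_nat_def Suc_leI card_gt_0_iff empty_iff)
  then have "real (card (edges Hh - {eh})) = real (card (edges Hh)) - 1"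
    using \<open>eh \<in> edges Hh\<close> fin by (simp add: of_nat_diff)
  then have "real (card (edges Hh - {eh})) = real (enum H2) - 1"
    using iso_card_edges[OF core(2) wf_H2 core(1)] unfolding enum_def by simp
  then show ?thesis using enum_H2_eq m2_H2_gt_1 by simp
qed

lemma construction_ratio:
  assumes c: "construction F eh H1 H2 J Hh Hf"
  shows "star_conditions eh Hh Hf \<Longrightarrow> real (eplus F J) / real (vplus F J) = m2_asym H1 H2"
    and "\<not> star_conditions eh Hh Hf \<Longrightarrow> real (eplus F J) / real (vplus F J) > m2_asym H1 H2"
proof -
  interpret P: petal_family "edges Hh - {eh}" "verts Hh" "\<lambda>f. verts (Hf f)" "\<lambda>f. edges (Hf f)"
      "m2_asym H1 H2" "m2 H2"
    by (rule construction_petal_family[OF c])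
  have card_core: "card (verts Hh) = vnum H2"
    using iso_card_verts[OF construction_core(2)[OF c]] unfolding vnum_def .
  have vplus: "real (vplus F J) = real (vnum H2) - 2 + real (card (P.outer_verts (edges Hh - {eh})))"
    using vplus_construction[OF c] vnum_H2_ge_3 card_core
    unfolding P.outer_verts_def P.petal_verts_def by simp
  then have "real (vplus F J) > 0" using vnum_H2_ge_3 by simp
  moreover have "real (eplus F J) - m2_asym H1 H2 * real (vplus F J) = P.excess (edges Hh - {eh})"
    unfolding P.excess_def vplus eplus_construction[OF c] P.petal_edges_def
      times_divide_eq_right[symmetric] card_inner_edges_div_m2[OF c]
    by (simp add: algebra_simps)
  moreover have "star_conditions eh Hh Hf \<longleftrightarrow> P.disjoint_petals"
    unfolding star_conditions_iff_disjoint_petals[OF c] P.disjoint_petals_def ..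
  ultimately show "star_conditions eh Hh Hf \<Longrightarrow> real (eplus F J) / real (vplus F J) = m2_asym H1 H2"
    and "\<not> star_conditions eh Hh Hf \<Longrightarrow> real (eplus F J) / real (vplus F J) > m2_asym H1 H2"
    using P.excess_eq_0_iff_disjoint_petals P.excess_nonneg[OF order_refl]
    by (auto simp: divide_eq_eq pos_less_divide_eq)
qed

end

theorem lemma6p1:
  fixes H1 H2 :: "'b graph" and F J Jstar :: "'a graph" and eh :: "'a set"
  assumes "wf_graph H1" "wf_graph H2" "nonempty_graph H1" "nonempty_graph H2"
    and "H1 \<noteq> H2"
    and "m2 H1 > m2 H2" "m2 H2 > 1"
    and "strictly_2_balanced H2"
    and "strictly_balanced_wrt H1 H2"
    and "wf_graph F" "eh \<in> edges F"
    and "J \<in> family_H F eh H1 H2 - family_Hstar F eh H1 H2"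
    and "Jstar \<in> family_Hstar F eh H1 H2"
  shows "real (eplus F J) / real (vplus F J) > real (eplus F Jstar) / real (vplus F Jstar)"
proof -
  note ratio = construction_ratio[OF assms(1-4,7-9)]
  obtain Hh Hf where "construction F eh H1 H2 J Hh Hf" "\<not> star_conditions eh Hh Hf"
    using assms(12) unfolding family_H_def family_Hstar_def by blast
  then have "real (eplus F J) / real (vplus F J) > m2_asym H1 H2" by (rule ratio(2))
  moreover obtain Hh' Hf' where "construction F eh H1 H2 Jstar Hh' Hf'" "star_conditions eh Hh' Hf'"
    using assms(13) unfolding family_Hstar_def by blast
  then have "real (eplus F Jstar) / real (vplus F Jstar) = m2_asym H1 H2" by (rule ratio(1))
  ultimately show ?thesis by simp
qed

end
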